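(* Let $m$ be an integer with $m=3$ or $m\geqslant 5$, and let $\mathcal{H}_m$ be the binary Hamming code of length $n=2^m-1$ (an $[n,n-m,3]$ code). Then $\mathcal{H}_m$ is log-concave.
   Context: The binary Hamming code $\mathcal{H}_m$ is the binary linear code of length $2^m-1$ whose parity-check matrix has as columns all $2^m-1$ nonzero vectors of $\mathbb{F}_2^m$ (equivalently, the dual of the binary simplex code). For a linear code $\mathcal C$ of length $n$, $A_i$ denotes the number of codewords of Hamming weight $i$. The nonzero weight distribution of $\mathcal C$ is the subsequence $a_0,a_1,\dots,a_N$ of $A_0,A_1,\dots,A_n$ consisting of the nonzero values, in their order of appearance (so $a_0=A_0=1$). A sequence $a_0,\dots,a_N$ is log-concave if $a_i^2\geqslant a_{i-1}a_{i+1}$ for all $1\leqslant i\leqslant N-1$. A linear code is called log-concave if its nonzero weight distribution is log-concave. *)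

theory Defs
  imports Main
begin

text \<open>Binary words of length n are modelled as functions nat \<Rightarrow> bool that vanish
  outside the coordinate positions {0..<n} (True = 1 in F_2).\<close>

definition words :: "nat \<Rightarrow> (nat \<Rightarrow> bool) set" where
  "words n = {c. \<forall>j\<ge>n. \<not> c j}"

definition hweight :: "nat \<Rightarrow> (nat \<Rightarrow> bool) \<Rightarrow> nat" where
  "hweight n c = card {j. j < n \<and> c j}"

text \<open>Binary Hamming code H_m of length 2^m - 1: the kernel of the m x (2^m-1)
  parity-check matrix H whose column at position j is the binary expansion of j+1
  (entry in row i is bit i of j+1). These columns run through all nonzero vectors of F_2^m.
  c is in the kernel iff for every row i, the sum over F_2 of H(i,j) c(j) is 0.\<close>

definition hamming_code :: "nat \<Rightarrow> (nat \<Rightarrow> bool) set" where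
  "hamming_code m = {c \<in> words (2^m - 1).
      \<forall>i<m. even (card {j. j < 2^m - 1 \<and> c j \<and> odd ((j + 1) div 2^i)})}"

definition weight_count :: "(nat \<Rightarrow> bool) set \<Rightarrow> nat \<Rightarrow> nat \<Rightarrow> nat" where
  "weight_count C n i = card {c \<in> C. hweight n c = i}"

definition nonzero_weight_distribution :: "(nat \<Rightarrow> bool) set \<Rightarrow> nat \<Rightarrow> nat list" where
  "nonzero_weight_distribution C n = filter (\<lambda>a. a \<noteq> 0) (map (weight_count C n) [0..<n+1])"

definition log_concave :: "nat list \<Rightarrow> bool" where
  "log_concave a = (\<forall>i. 1 \<le> i \<and> i + 1 < length a \<longrightarrow> a ! (i - 1) * a ! (i + 1) \<le> (a ! i)^2)"

definition log_concave_code :: "(nat \<Rightarrow> bool) set \<Rightarrow> nat \<Rightarrow> bool" where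
  "log_concave_code C n = log_concave (nonzero_weight_distribution C n)"

end

(*
  Identify a word with its support S, a subset of {0, ..., n - 1} with n = 2^m - 1; its syndrome
  is the bitwise sum of the columns j + 1, j in S, of the parity-check matrix. Since the columns
  run through all nonzero vectors of F_2^m, every non-codeword lies at distance one from exactly
  one codeword.
  Counting the words of weight i accordingly gives the recurrence
    C(n, i) = A_i + (i + 1) A_(i+1) + (n - i + 1) A_(i-1),
  whose solution is (n + 1) A_i = C(n, i) + n e_i with e_i = +-C(N, i div 2) and n = 2N + 1.
  For 8 <= i <= N + 1 and N >= 15 the correction n e_i is so small compared with C(n, i) that
  the log-concavity of the binomial coefficients survives; for 3 <= i <= 7 the inequalities reduce
  to polynomials in N - 15 with nonnegative coefficients, the upper half follows from the
  symmetry A_(n-i) = A_i, and m = 3 is a direct computation. The nonzero A_i are exactly those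
  with i = 0, 3 <= i <= n - 3 and i = n, which fixes the shape of the nonzero weight distribution.
*)

theory Submission
  imports Defs "HOL.Binomial_Plus"
begin

section \<open>Binomial coefficients\<close>

lemma binomial_Suc_mult: "(k + 1) * (n choose (k + 1)) = (n - k) * (n choose k)"
  using binomial_absorption[of k n] binomial_absorb_comp[of n k] by simp

lemma binomial_Suc_mult_int:
  "(int k + 1) * int (n choose (k + 1)) = (int n - int k) * int (n choose k)"
proof (cases "k \<le> n")
  case True
  then show ?thesis
    using arg_cong[OF binomial_Suc_mult[of k n], of int]
    by (simp add: of_nat_diff algebra_simps del: binomial_Suc_Suc)
qed (simp add: binomial_eq_0)

lemma int_binomial_mult_fact: "int (n choose k) * fact k = (\<Prod>j<k. int n - int j)"
proof -
  have "(of_int (int (n choose k) * fact k) :: rat) = of_int (\<Prod>j<k. int n - int j)"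
    by (simp add: binomial_gbinomial gbinomial_mult_fact' atLeast0LessThan)
  then show ?thesis by (simp only: of_int_eq_iff)
qed

lemma binomial_recurrence:
  assumes "1 \<le> i"
  shows "(n choose i) + (i + 1) * (n choose (i + 1)) + (n + 1 - i) * (n choose (i - 1))
    = (n + 1) * (n choose i)"
proof (cases "i \<le> n")
  case True
  have "(n + 1 - i) * (n choose (i - 1)) = i * (n choose i)"
    using binomial_Suc_mult[of "i - 1" n] assms by (simp add: Suc_diff_le del: binomial_Suc_Suc)
  then have "(n choose i) + (i + 1) * (n choose (i + 1)) + (n + 1 - i) * (n choose (i - 1))
      = (n choose i) + (n - i) * (n choose i) + i * (n choose i)"
    by (simp only: binomial_Suc_mult)
  also have "\<dots> = (1 + (n - i) + i) * (n choose i)"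
    by (simp only: distrib_right mult_1_left)
  also have "1 + (n - i) + i = n + 1"
    using True by simp
  finally show ?thesis .
next
  case False
  then have "n choose i = 0" "n choose (i + 1) = 0"
    by simp_all
  moreover have "(n + 1 - i) * (n choose (i - 1)) = 0"
    using False by (cases "i = n + 1") simp_all
  ultimately show ?thesis by (simp only: mult_0_right add_0)
qed

lemma binomial_le_binomial:
  assumes "r \<le> s" "s \<le> n - r"
  shows "n choose r \<le> n choose s"
proof (cases "2 * s \<le> n")
  case True
  then show ?thesis using assms by (intro binomial_mono) auto
next
  case False
  then have "n choose r \<le> n choose (n - s)"
    using assms by (intro binomial_mono) auto
  also have "\<dots> = n choose s"
    using False assms by (intro binomial_symmetric[symmetric]) auto
  finally show ?thesis .
qed

lemma binomial_mult_le_vandermonde: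
  assumes "a \<le> i"
  shows "(n choose a) * (m choose (i - a)) \<le> (n + m) choose i"
proof -
  have "(n choose a) * (m choose (i - a)) \<le> (\<Sum>k\<le>i. (n choose k) * (m choose (i - k)))"
    using assms by (intro member_le_sum) auto
  also have "\<dots> = (n + m) choose i"
    by (rule vandermonde)
  finally show ?thesis .
qed

lemma binomial_4_ge_square:
  assumes "15 \<le> N"
  shows "(2 * N + 3)^2 \<le> (N + 1) choose 4"
proof -
  obtain t where N: "N = t + 15"
    using assms by (metis add.commute le_add_diff_inverse)
  have "int ((N + 1) choose 4) * 24 = (\<Prod>j<4. int (N + 1) - int j)"
    using int_binomial_mult_fact[of "N + 1" 4] by (simp add: fact_numeral)
  also have "\<dots> = 24 * int ((2 * N + 3)^2) + int (17544 + 8954 * t + 1163 * t^2 + 58 * t^3 + t^4)"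
    unfolding N by (simp add: lessThan_nat_numeral algebra_simps power_numeral_reduce)
  finally show ?thesis
    by linarith
qed

lemma binomial_log_concavity_gap:
  assumes "1 \<le> i" "i \<le> n"
  shows "(int i + 1) * (int n + 1 - int i)
      * (int (n choose i) ^ 2 - int (n choose (i - 1)) * int (n choose (i + 1)))
    = (int n + 1) * int (n choose i) ^ 2"
proof -
  have "(int n + 1 - int i) * int (n choose (i - 1)) = int i * int (n choose i)"
    using binomial_Suc_mult_int[of "i - 1" n] assms by (simp add: of_nat_diff)
  then show ?thesis
    using binomial_Suc_mult_int[of i n] by algebra
qed

lemma binomial_perturbation_weighted_sum:
  fixes e0 e1 e2 :: int
  assumes i: "i \<le> n"
    and small: "(int n + 2)^2 * \<bar>e0\<bar> \<le> int (n choose i)" "(int n + 2)^2 * \<bar>e1\<bar> \<le> int (n choose i)"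
      "(int n + 2)^2 * \<bar>e2\<bar> \<le> int (n choose i)"
  shows "2 * ((int i + 1) * (int n + 1 - int i)) * \<bar>e1\<bar> + int i * (int i + 1) * \<bar>e2\<bar>
      + (int n + 1 - int i) * (int n - int i) * \<bar>e0\<bar> \<le> int (n choose i)"
    (is "?S \<le> _")
proof -
  define P w0 w2 where "P = (int i + 1) * (int n + 1 - int i)"
    and "w0 = (int n + 1 - int i) * (int n - int i)" and "w2 = int i * (int i + 1)"
  have "P > 0" "w0 \<ge> 0" "w2 \<ge> 0"
    using i by (simp_all add: P_def w0_def w2_def)
  have "2 * P * ((int n + 2)^2 * \<bar>e1\<bar>) \<le> 2 * P * int (n choose i)"
    "w2 * ((int n + 2)^2 * \<bar>e2\<bar>) \<le> w2 * int (n choose i)"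
    "w0 * ((int n + 2)^2 * \<bar>e0\<bar>) \<le> w0 * int (n choose i)"
    using small \<open>P > 0\<close> \<open>w0 \<ge> 0\<close> \<open>w2 \<ge> 0\<close> by (simp_all add: mult_left_mono)
  then have "(int n + 2)^2 * ?S \<le> (2 * P + w2 + w0) * int (n choose i)"
    by (simp add: P_def w0_def w2_def algebra_simps)
  also have "\<dots> = (int n + 1) * (int n + 2) * int (n choose i)"
    by (simp add: P_def w0_def w2_def algebra_simps)
  also have "\<dots> \<le> (int n + 2)^2 * int (n choose i)"
    by (intro mult_right_mono) (simp_all add: power2_eq_square)
  finally show ?thesis
    by (simp add: mult_le_cancel_left_pos)
qed

lemma binomial_perturbation_cross_term:
  fixes e0 e1 e2 :: int
  assumes i: "1 \<le> i" "i \<le> n"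
    and small: "(int n + 2)^2 * \<bar>e0\<bar> \<le> int (n choose i)" "(int n + 2)^2 * \<bar>e1\<bar> \<le> int (n choose i)"
      "(int n + 2)^2 * \<bar>e2\<bar> \<le> int (n choose i)"
  shows "- (int (n choose i) ^ 2) \<le> (int i + 1) * (int n + 1 - int i)
    * (2 * int (n choose i) * e1 - int (n choose (i - 1)) * e2 - int (n choose (i + 1)) * e0)"
proof -
  define b0 b1 b2 where "b0 = int (n choose (i - 1))" and "b1 = int (n choose i)"
    and "b2 = int (n choose (i + 1))"
  define P where "P = (int i + 1) * (int n + 1 - int i)"
  have "P > 0" "b0 \<ge> 0" "b1 \<ge> 0" "b2 \<ge> 0"
    using i by (simp_all add: P_def b0_def b1_def b2_def)
  have "(int n + 1 - int i) * b0 = int i * b1" "(int i + 1) * b2 = (int n - int i) * b1"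
    using binomial_Suc_mult_int[of "i - 1" n] binomial_Suc_mult_int[of i n] i
    by (simp_all add: b0_def b1_def b2_def of_nat_diff)
  then have Pb: "P * b0 = int i * (int i + 1) * b1" "P * b2 = (int n + 1 - int i) * (int n - int i) * b1"
    unfolding P_def by algebra+
  have "\<bar>2 * b1 * e1 - b0 * e2 - b2 * e0\<bar> \<le> \<bar>2 * b1 * e1\<bar> + \<bar>b0 * e2\<bar> + \<bar>b2 * e0\<bar>"
    using abs_triangle_ineq4[of "2 * b1 * e1 - b0 * e2" "b2 * e0"] abs_triangle_ineq4[of "2 * b1 * e1" "b0 * e2"]
    by linarith
  also have "\<dots> = 2 * b1 * \<bar>e1\<bar> + b0 * \<bar>e2\<bar> + b2 * \<bar>e0\<bar>"
    using \<open>b0 \<ge> 0\<close> \<open>b1 \<ge> 0\<close> \<open>b2 \<ge> 0\<close> by (simp add: abs_mult)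
  finally have "P * \<bar>2 * b1 * e1 - b0 * e2 - b2 * e0\<bar>
      \<le> P * (2 * b1 * \<bar>e1\<bar> + b0 * \<bar>e2\<bar> + b2 * \<bar>e0\<bar>)"
    using \<open>P > 0\<close> by (simp add: mult_left_mono)
  also have "\<dots> = b1 * (2 * P * \<bar>e1\<bar> + int i * (int i + 1) * \<bar>e2\<bar>
      + (int n + 1 - int i) * (int n - int i) * \<bar>e0\<bar>)"
    using Pb by algebra
  also have "\<dots> \<le> b1 * b1"
    using binomial_perturbation_weighted_sum[OF i(2) small] \<open>b1 \<ge> 0\<close>
    by (intro mult_left_mono) (simp_all add: P_def b1_def)
  finally have "P * \<bar>2 * b1 * e1 - b0 * e2 - b2 * e0\<bar> \<le> b1 ^ 2"
    by (simp add: power2_eq_square)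
  moreover have "P * (- \<bar>2 * b1 * e1 - b0 * e2 - b2 * e0\<bar>) \<le> P * (2 * b1 * e1 - b0 * e2 - b2 * e0)"
    using \<open>P > 0\<close> by (intro mult_left_mono) simp_all
  ultimately show ?thesis
    by (simp add: P_def b0_def b1_def b2_def)
qed

text \<open>The log-concavity gap of the binomial coefficients dominates the cross term, and the
  quadratic term \<open>n^2 (e\<^sub>1^2 - e\<^sub>0 e\<^sub>2)\<close> is nonnegative.\<close>

lemma binomial_perturbation_log_concave:
  fixes e0 e1 e2 :: int
  assumes i: "1 \<le> i" "i \<le> n"
    and sign: "e0 * e2 \<le> 0"
    and small: "(int n + 2)^2 * \<bar>e0\<bar> \<le> int (n choose i)" "(int n + 2)^2 * \<bar>e1\<bar> \<le> int (n choose i)"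
      "(int n + 2)^2 * \<bar>e2\<bar> \<le> int (n choose i)"
  shows "(int (n choose (i - 1)) + int n * e0) * (int (n choose (i + 1)) + int n * e2)
    \<le> (int (n choose i) + int n * e1)^2"
proof -
  define b0 b1 b2 where "b0 = int (n choose (i - 1))" and "b1 = int (n choose i)"
    and "b2 = int (n choose (i + 1))"
  define P where "P = (int i + 1) * (int n + 1 - int i)"
  have "P > 0"
    using i by (simp add: P_def)
  have gap: "P * (b1^2 - b0 * b2) = (int n + 1) * b1^2"
    using binomial_log_concavity_gap[OF i] by (simp add: P_def b0_def b1_def b2_def)
  have cross: "- (b1 ^ 2) \<le> P * (2 * b1 * e1 - b0 * e2 - b2 * e0)"
    using binomial_perturbation_cross_term[OF i small] by (simp add: P_def b0_def b1_def b2_def)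
  have "0 \<le> e1^2 - e0 * e2"
    using sign zero_le_power2[of e1] by linarith
  then have "0 \<le> int n ^ 2 * P * (e1^2 - e0 * e2)"
    using \<open>P > 0\<close> by simp
  moreover have "int n * (- (b1 ^ 2)) \<le> int n * (P * (2 * b1 * e1 - b0 * e2 - b2 * e0))"
    using cross by (intro mult_left_mono) simp_all
  moreover have "P * ((b1 + int n * e1)^2 - (b0 + int n * e0) * (b2 + int n * e2))
      = P * (b1^2 - b0 * b2) + int n * (P * (2 * b1 * e1 - b0 * e2 - b2 * e0))
        + int n ^ 2 * P * (e1^2 - e0 * e2)"
    by (simp add: algebra_simps power2_eq_square)
  ultimately have "b1^2 \<le> P * ((b1 + int n * e1)^2 - (b0 + int n * e0) * (b2 + int n * e2))"
    using gap by (simp add: algebra_simps)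
  then have "0 \<le> P * ((b1 + int n * e1)^2 - (b0 + int n * e0) * (b2 + int n * e2))"
    using zero_le_power2[of b1] by linarith
  then show ?thesis
    using \<open>P > 0\<close> by (simp add: zero_le_mult_iff b0_def b1_def b2_def)
qed

section \<open>Sequences\<close>

lemma filter_nonzero_map_upt:
  fixes A :: "nat \<Rightarrow> nat"
  assumes n: "7 \<le> n"
    and zero: "A 1 = 0" "A 2 = 0" "A (n - 2) = 0" "A (n - 1) = 0"
    and pos: "0 < A 0" "0 < A n" "\<And>i. 3 \<le> i \<Longrightarrow> i \<le> n - 3 \<Longrightarrow> 0 < A i"
  shows "filter (\<lambda>a. a \<noteq> 0) (map A [0..<n + 1]) = map A (0 # [3..<n - 2] @ [n])"
proof -
  have "n + 1 = 3 + (n - 2)" "n + 1 = n - 2 + 3"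
    using n by simp_all
  then have "[0..<n + 1] = [0..<3] @ [3..<n - 2] @ [n - 2..<n - 2 + 3]"
    using n upt_add_eq_append[of 0 3 "n - 2"] upt_add_eq_append[of 3 "n - 2" 3] by (simp only:)
  also have "\<dots> = [0, 1, 2] @ [3..<n - 2] @ [n - 2, n - 1, n]"
    using n by (simp add: upt_conv_Cons numeral_3_eq_3, arith)
  finally have upt: "[0..<n + 1] = [0, 1, 2] @ [3..<n - 2] @ [n - 2, n - 1, n]" .
  have "filter (\<lambda>k. A k \<noteq> 0) [3..<n - 2] = [3..<n - 2]"
    using pos(3) by (intro filter_True) fastforce
  then show ?thesis
    unfolding upt using zero pos(1,2) by (simp add: filter_map o_def)
qed

lemma log_concave_filter_nonzero:
  fixes A :: "nat \<Rightarrow> nat"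
  assumes n: "7 \<le> n"
    and sym: "\<And>i. i \<le> n \<Longrightarrow> A (n - i) = A i"
    and A012: "0 < A 0" "A 1 = 0" "A 2 = 0"
    and pos: "\<And>i. 3 \<le> i \<Longrightarrow> i \<le> n - 3 \<Longrightarrow> 0 < A i"
    and first: "A 0 * A 4 \<le> A 3 ^ 2"
    and inner: "\<And>i. 4 \<le> i \<Longrightarrow> i \<le> n - 4 \<Longrightarrow> A (i - 1) * A (i + 1) \<le> A i ^ 2"
  shows "log_concave (filter (\<lambda>a. a \<noteq> 0) (map A [0..<n + 1]))"
proof -
  define ks where "ks = 0 # [3..<n - 2] @ [n]"
  have nth_ks: "ks ! j = (if j = 0 then 0 else if j = n - 4 then n else j + 2)" if "j \<le> n - 4" for j
    using that n by (auto simp: ks_def nth_append nth_Cons')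
  have "A (ks ! (j - 1)) * A (ks ! (j + 1)) \<le> A (ks ! j) ^ 2" if j: "1 \<le> j" "j + 1 \<le> n - 4" for j
  proof -
    consider "j = 1" | "j = n - 5" "j \<noteq> 1" | "2 \<le> j" "j \<le> n - 6"
      using j by atomize_elim presburger
    then show ?thesis
    proof cases
      case 1
      have "ks = 0 # 3 # 4 # [5..<n - 2] @ [n]"
        using n by (simp add: ks_def upt_conv_Cons)
      then show ?thesis
        unfolding 1 using first by simp
    next
      case 2
      have "ks ! (n - 6) = n - 4"
        using n nth_ks[of "n - 6"] by simp presburger
      moreover have "ks ! (n - 5) = n - 3"
        using n nth_ks[of "n - 5"] by simp presburger
      moreover have "ks ! (n - 4) = n"
        using n nth_ks[of "n - 4"] by simp
      moreover have "j - 1 = n - 6" "j + 1 = n - 4"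
        using 2 n by simp_all
      ultimately show ?thesis
        using 2 first n sym[of 0] sym[of 3] sym[of 4] by (simp add: mult.commute)
    next
      case 3
      have "ks ! (j - 1) = j + 1"
        using 3 nth_ks[of "j - 1"] by simp presburger
      moreover have "ks ! j = j + 2"
        using 3 nth_ks[of j] by simp presburger
      moreover have "ks ! (j + 1) = j + 3"
        using 3 nth_ks[of "j + 1"] by simp presburger
      ultimately show ?thesis
        using 3 inner[of "j + 2"] by (simp add: numeral_3_eq_3)
    qed
  qed
  moreover have "length ks = n - 3"
    using n by (simp add: ks_def)
  moreover have "filter (\<lambda>a. a \<noteq> 0) (map A [0..<n + 1]) = map A ks"
    unfolding ks_def using n A012 sym[of 0] sym[of 1] sym[of 2] pos
    by (intro filter_nonzero_map_upt) simp_all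
  ultimately show ?thesis
    unfolding log_concave_def by auto
qed

lemma le_square_of_scaled:
  fixes L x y z p q r :: int
  assumes "L \<noteq> 0" "L * x = p" "L * y = q" "L * z = r" "q^2 - p * r = int d"
  shows "x * z \<le> y^2"
proof -
  have "L^2 * (y^2 - x * z) = q^2 - p * r"
    unfolding assms(2-4)[symmetric] by (simp add: algebra_simps power2_eq_square)
  also have "\<dots> = int d"
    by (rule assms(5))
  finally have "L^2 * (y^2 - x * z) = int d" .
  then have "0 \<le> L^2 * (y^2 - x * z)"
    by simp
  then show ?thesis
    using assms(1) by (simp add: zero_le_mult_iff)
qed

section \<open>Supports and syndromes\<close>

text \<open>A binary word is identified with its support \<open>S \<subseteq> {..<2^m - 1}\<close>. Column \<open>j\<close> of the
  parity-check matrix is the binary expansion of \<open>j + 1\<close>, so \<open>syndrome_bit S k\<close> is the \<open>k\<close>-th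
  coordinate of the syndrome of \<open>S\<close>.\<close>

definition syndrome_bit :: "nat set \<Rightarrow> nat \<Rightarrow> bool" where
  "syndrome_bit S k \<longleftrightarrow> odd (card {j \<in> S. bit (j + 1) k})"

definition zero_syndrome :: "nat \<Rightarrow> nat set \<Rightarrow> bool" where
  "zero_syndrome m S \<longleftrightarrow> (\<forall>k<m. \<not> syndrome_bit S k)"

definition hamming_weight_count :: "nat \<Rightarrow> nat \<Rightarrow> nat" where
  "hamming_weight_count m i = card {S. S \<subseteq> {..<2^m - 1} \<and> zero_syndrome m S \<and> card S = i}"

definition toggle :: "nat set \<Rightarrow> nat \<Rightarrow> nat set" where
  "toggle S p = (if p \<in> S then S - {p} else insert p S)"

lemma weight_count_hamming_code:
  "weight_count (hamming_code m) (2^m - 1) i = hamming_weight_count m i"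
proof -
  let ?n = "2^m - 1 :: nat"
  let ?F = "{S. S \<subseteq> {..<?n} \<and> zero_syndrome m S \<and> card S = i}"
  have parity_eq: "{j. j < ?n \<and> (j \<in> S) \<and> odd ((j + 1) div 2^k)} = {j \<in> S. bit (j + 1) k}"
    if "S \<subseteq> {..<?n}" for S k
    using that by (auto simp: bit_iff_odd)
  have support_eq: "{j. j < ?n \<and> j \<in> S} = S" if "S \<subseteq> {..<?n}" for S
    using that by auto
  have "bij_betw (\<lambda>S j. j \<in> S) ?F {c \<in> hamming_code m. hweight ?n c = i}"
  proof (rule bij_betw_byWitness[where f' = "\<lambda>c. {j. j < ?n \<and> c j}"])
    show "\<forall>S\<in>?F. {j. j < ?n \<and> j \<in> S} = S" using support_eq by blast
    show "\<forall>c\<in>{c \<in> hamming_code m. hweight ?n c = i}. (\<lambda>j. j \<in> {j. j < ?n \<and> c j}) = c"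
      by (auto simp: hamming_code_def words_def fun_eq_iff) (meson not_le)
    show "(\<lambda>S j. j \<in> S) ` ?F \<subseteq> {c \<in> hamming_code m. hweight ?n c = i}"
      using parity_eq support_eq
      by (auto simp: hamming_code_def words_def hweight_def zero_syndrome_def syndrome_bit_def)
    show "(\<lambda>c. {j. j < ?n \<and> c j}) ` {c \<in> hamming_code m. hweight ?n c = i} \<subseteq> ?F"
      by (auto simp: hamming_code_def hweight_def zero_syndrome_def syndrome_bit_def bit_iff_odd)
  qed
  then show ?thesis
    unfolding weight_count_def hamming_weight_count_def by (simp add: bij_betw_same_card)
qed

lemma nat_eq_if_low_bits_eq:
  fixes x y :: nat
  assumes "x < 2^m" "y < 2^m" "\<forall>k<m. bit x k = bit y k"
  shows "x = y"
  by (metis assms bit_eq_iff bit_take_bit_iff take_bit_nat_eq_self_iff)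

lemma ex_nat_with_low_bits: "\<exists>x::nat. x < 2^m \<and> (\<forall>k<m. bit x k = f k)"
proof (intro exI conjI allI impI)
  show "horner_sum of_bool 2 (map f [0..<m]) < (2::nat)^m"
    using horner_sum_of_bool_2_less[of "map f [0..<m]"] by simp
  show "bit (horner_sum of_bool 2 (map f [0..<m]) :: nat) k = f k" if "k < m" for k
    using that by (simp add: bit_horner_sum_bit_iff)
qed

lemma toggle_toggle [simp]: "toggle (toggle S p) p = S"
  by (auto simp: toggle_def)

lemma finite_toggle [simp]: "finite (toggle S p) \<longleftrightarrow> finite S"
  by (simp add: toggle_def)

lemma card_toggle:
  "finite S \<Longrightarrow> card (toggle S p) = (if p \<in> S then card S - 1 else card S + 1)"
  by (simp add: toggle_def)

lemma syndrome_bit_toggle: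
  assumes "finite S"
  shows "syndrome_bit (toggle S p) k \<longleftrightarrow> syndrome_bit S k \<noteq> bit (p + 1) k"
proof -
  let ?J = "{j \<in> S. bit (j + 1) k}"
  have "{j \<in> toggle S p. bit (j + 1) k} = (if bit (p + 1) k then toggle ?J p else ?J)"
    by (auto simp: toggle_def)
  moreover have "finite ?J" using assms by simp
  moreover have "odd (card (toggle ?J p)) \<longleftrightarrow> even (card ?J)" if "finite ?J"
    using that by (cases "p \<in> ?J") (auto simp: card_toggle card_gt_0_iff)
  ultimately show ?thesis by (auto simp: syndrome_bit_def)
qed

lemma zero_syndrome_toggle_iff:
  "finite S \<Longrightarrow> zero_syndrome m (toggle S p) \<longleftrightarrow> (\<forall>k<m. bit (p + 1) k = syndrome_bit S k)"
  by (auto simp: zero_syndrome_def syndrome_bit_toggle)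

lemma toggle_zero_syndrome_unique:
  assumes "finite S" "p < 2^m - 1" "q < 2^m - 1"
    and "zero_syndrome m (toggle S p)" "zero_syndrome m (toggle S q)"
  shows "p = q"
proof -
  have "p + 1 = q + 1"
    using assms by (intro nat_eq_if_low_bits_eq[of _ m]) (auto simp: zero_syndrome_toggle_iff)
  then show ?thesis by simp
qed

lemma toggle_not_zero_syndrome:
  assumes "finite S" "zero_syndrome m S" "p < 2^m - 1"
  shows "\<not> zero_syndrome m (toggle S p)"
proof
  assume "zero_syndrome m (toggle S p)"
  then have "\<forall>k<m. bit (p + 1) k = syndrome_bit S k"
    using zero_syndrome_toggle_iff[OF assms(1)] by blast
  then have "\<forall>k<m. bit (p + 1) k = bit (0::nat) k"
    using assms(2) by (simp add: zero_syndrome_def)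
  then have "p + 1 = 0"
    using assms(3) by (intro nat_eq_if_low_bits_eq[of _ m]) auto
  then show False by simp
qed

lemma ex_toggle_zero_syndrome:
  assumes "finite S" "\<not> zero_syndrome m S"
  shows "\<exists>p < 2^m - 1. zero_syndrome m (toggle S p)"
proof -
  obtain x :: nat where x: "x < 2^m" "\<forall>k<m. bit x k = syndrome_bit S k"
    using ex_nat_with_low_bits by blast
  obtain k where "k < m" "syndrome_bit S k" using assms(2) by (auto simp: zero_syndrome_def)
  then have "bit x k" using x(2) by blast
  then have "x \<noteq> 0" by (intro notI) simp
  then show ?thesis
    using x assms(1) by (intro exI[of _ "x - 1"]) (auto simp: zero_syndrome_toggle_iff)
qed

lemma toggle_subset: "S \<subseteq> U \<Longrightarrow> p \<in> U \<Longrightarrow> toggle S p \<subseteq> U"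
  by (auto simp: toggle_def)

lemma bij_betw_toggle_codewords:
  "bij_betw (\<lambda>(T, p). toggle T p)
     {(T, p). T \<subseteq> {..<2^m - 1} \<and> zero_syndrome m T \<and> p < 2^m - 1 \<and> card (toggle T p) = i}
     {S. S \<subseteq> {..<2^m - 1} \<and> card S = i \<and> \<not> zero_syndrome m S}"
    (is "bij_betw ?f ?P ?W")
proof (rule bij_betw_imageI)
  have fin: "finite S" if "S \<subseteq> {..<2^m - 1 :: nat}" for S
    using that by (rule finite_subset) simp
  show "inj_on ?f ?P"
  proof (rule inj_onI)
    fix x y assume "x \<in> ?P" "y \<in> ?P" and eq: "?f x = ?f y"
    then obtain T p T' p' where x: "x = (T, p)" and y: "y = (T', p')"
      and T: "(T, p) \<in> ?P" and T': "(T', p') \<in> ?P"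
      by (metis surj_pair)
    define S where "S = toggle T p"
    have eq': "toggle T p = toggle T' p'"
      using eq x y by simp
    have "T = toggle S p" "T' = toggle S p'"
      by (simp add: S_def, simp only: S_def eq' toggle_toggle)
    moreover have "finite S"
      using T fin by (simp add: S_def)
    ultimately have "p = p'"
      using T T' toggle_zero_syndrome_unique[of S p m p'] by simp
    then show "x = y"
      using \<open>T = toggle S p\<close> \<open>T' = toggle S p'\<close> x y by simp
  qed
  show "?f ` ?P = ?W"
  proof (intro equalityI subsetI)
    fix S assume "S \<in> ?f ` ?P"
    then obtain T p where T: "T \<subseteq> {..<2^m - 1}" "zero_syndrome m T" "p < 2^m - 1"
      and S: "S = toggle T p" "card S = i"
      by auto
    then have "S \<subseteq> {..<2^m - 1}" "\<not> zero_syndrome m S"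
      using toggle_subset[of T _ p] toggle_not_zero_syndrome[OF fin[OF T(1)] T(2,3)] by auto
    then show "S \<in> ?W"
      using S(2) by simp
  next
    fix S assume S: "S \<in> ?W"
    then obtain p where p: "p < 2^m - 1" "zero_syndrome m (toggle S p)"
      using ex_toggle_zero_syndrome[of S m] fin by auto
    then have "(toggle S p, p) \<in> ?P"
      using S toggle_subset[of S _ p] by simp
    then show "S \<in> ?f ` ?P"
      by (auto intro!: image_eqI[where x = "(toggle S p, p)"])
  qed
qed

lemma card_toggle_eq_iff:
  assumes "finite T" "1 \<le> i"
  shows "card (toggle T p) = i \<longleftrightarrow> p \<notin> T \<and> card T = i - 1 \<or> p \<in> T \<and> card T = i + 1"
  using assms by (auto simp: card_toggle card_gt_0_iff)

lemma card_codeword_toggles: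
  assumes "1 \<le> i"
  shows "card {(T, p). T \<subseteq> {..<2^m - 1} \<and> zero_syndrome m T \<and> p < 2^m - 1
      \<and> card (toggle T p) = i}
    = (2^m - i) * hamming_weight_count m (i - 1) + (i + 1) * hamming_weight_count m (i + 1)"
proof -
  define U where "U = {..<2^m - 1 :: nat}"
  define C where "C j = {T. T \<subseteq> U \<and> zero_syndrome m T \<and> card T = j}" for j
  have fin: "finite S" if "S \<subseteq> U" for S
    using that unfolding U_def by (rule finite_subset) simp
  have finC: "finite (C j)" for j
    by (rule finite_subset[of _ "Pow U"]) (auto simp: C_def U_def)
  have A: "card (C j) = hamming_weight_count m j" for j
    by (simp add: C_def U_def hamming_weight_count_def)
  have mem: "(T, p) \<in> Sigma (C (i - 1)) (\<lambda>T. U - T) \<union> Sigma (C (i + 1)) (\<lambda>T. T)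
      \<longleftrightarrow> T \<subseteq> U \<and> zero_syndrome m T \<and> p \<in> U \<and> card (toggle T p) = i" for T p
  proof (cases "T \<subseteq> U")
    case True
    then show ?thesis
      using card_toggle_eq_iff[OF fin[OF True] assms, of p] by (auto simp: C_def)
  qed (auto simp: C_def)
  have "{(T, p). T \<subseteq> {..<2^m - 1} \<and> zero_syndrome m T \<and> p < 2^m - 1 \<and> card (toggle T p) = i}
      = Sigma (C (i - 1)) (\<lambda>T. U - T) \<union> Sigma (C (i + 1)) (\<lambda>T. T)"
    unfolding set_eq_iff by (clarsimp simp only: mem) (simp add: U_def)
  also have "card \<dots> = card (Sigma (C (i - 1)) (\<lambda>T. U - T)) + card (Sigma (C (i + 1)) (\<lambda>T. T))"
    using finC fin by (intro card_Un_disjoint) (auto simp: C_def)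
  also have "card (Sigma (C (i - 1)) (\<lambda>T. U - T)) = (\<Sum>T\<in>C (i - 1). card (U - T))"
    using finC by (simp add: card_SigmaI U_def)
  also have "\<dots> = card (C (i - 1)) * (2^m - i)"
    using assms fin by (simp add: C_def U_def card_Diff_subset)
  also have "card (Sigma (C (i + 1)) (\<lambda>T. T)) = card (C (i + 1)) * (i + 1)"
    using finC fin by (simp add: card_SigmaI C_def)
  finally show ?thesis
    by (simp add: A)
qed

lemma hamming_weight_recurrence:
  assumes "1 \<le> i"
  shows "(2^m - 1) choose i = hamming_weight_count m i + (i + 1) * hamming_weight_count m (i + 1)
           + (2^m - i) * hamming_weight_count m (i - 1)"
proof -
  let ?U = "{..<2^m - 1 :: nat}"
  let ?NC = "{S. S \<subseteq> ?U \<and> card S = i \<and> \<not> zero_syndrome m S}"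
  have "{S. S \<subseteq> ?U \<and> card S = i}
      = {S. S \<subseteq> ?U \<and> zero_syndrome m S \<and> card S = i} \<union> ?NC"
    by auto
  moreover have "finite {S. S \<subseteq> ?U \<and> card S = i}"
    by (rule finite_subset[of _ "Pow ?U"]) auto
  ultimately have "card {S. S \<subseteq> ?U \<and> card S = i} = hamming_weight_count m i + card ?NC"
    unfolding hamming_weight_count_def by (metis (no_types, lifting) card_Un_disjoint disjoint_iff
      finite_Un mem_Collect_eq)
  moreover have "card {S. S \<subseteq> ?U \<and> card S = i} = (2^m - 1) choose i"
    using n_subsets[of ?U i] by simp
  moreover have "card ?NC
      = (2^m - i) * hamming_weight_count m (i - 1) + (i + 1) * hamming_weight_count m (i + 1)"
    using bij_betw_same_card[OF bij_betw_toggle_codewords] card_codeword_toggles[OF assms]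
    by (simp only:)
  ultimately show ?thesis by linarith
qed

section \<open>The weight distribution\<close>

lemma hamming_weight_count_0: "hamming_weight_count m 0 = 1"
proof -
  have "{S. S \<subseteq> {..<2^m - 1} \<and> zero_syndrome m S \<and> card S = 0} = {{}}"
    by (auto simp: zero_syndrome_def syndrome_bit_def dest: finite_subset)
  then show ?thesis by (simp add: hamming_weight_count_def)
qed

lemma hamming_weight_count_1: "hamming_weight_count m 1 = 0"
proof -
  have "\<not> zero_syndrome m {p}" if "p < 2^m - 1" for p
    using toggle_not_zero_syndrome[of "{}" m p] that
    by (simp add: zero_syndrome_def syndrome_bit_def toggle_def)
  then have "{S. S \<subseteq> {..<2^m - 1} \<and> zero_syndrome m S \<and> card S = 1} = {}"
    by (auto simp: card_Suc_eq)
  then show ?thesis by (simp add: hamming_weight_count_def)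
qed

text \<open>\<open>alt_coeff N i\<close> is the coefficient of \<open>y^i\<close> in \<open>(1 - y^2)^N (1 - y)\<close>.  For
  \<open>n = 2N + 1\<close>, \<open>weight_formula N i\<close> is the coefficient of \<open>y^i\<close> in the MacWilliams
  transform \<open>(1 + y)^n + n (1 + y)^N (1 - y)^(N + 1)\<close> of the simplex code, i.e. \<open>(n + 1) A_i\<close>.\<close>

definition alt_coeff :: "nat \<Rightarrow> nat \<Rightarrow> int" where
  "alt_coeff N i = (-1) ^ ((i + 1) div 2) * int (N choose (i div 2))"

definition weight_formula :: "nat \<Rightarrow> nat \<Rightarrow> int" where
  "weight_formula N i = int ((2 * N + 1) choose i) + int (2 * N + 1) * alt_coeff N i"

lemma alt_coeff_recurrence:
  assumes "1 \<le> i"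
  shows "alt_coeff N i + int (i + 1) * alt_coeff N (i + 1)
    + int (2 * N + 2 - i) * alt_coeff N (i - 1) = 0"
proof (cases "even i")
  case True
  then obtain k where k: "i = 2 * k" and "k \<ge> 1" using assms by (auto elim!: evenE)
  have d: "(i - 1 + 1) div 2 = k" "(i - 1) div 2 = k - 1" "(i + 1) div 2 = k" "i div 2 = k"
    "(i + 1 + 1) div 2 = k + 1"
    using k \<open>k \<ge> 1\<close> by auto
  define s :: int where "s = (-1)^k"
  have a: "alt_coeff N (i - 1) = s * int (N choose (k - 1))"
    "alt_coeff N i = s * int (N choose k)"
    "alt_coeff N (i + 1) = - s * int (N choose k)"
    unfolding alt_coeff_def d s_def by simp_all
  have "int k * int (N choose k) = int (N - (k - 1)) * int (N choose (k - 1))"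
    using arg_cong[OF binomial_Suc_mult[of "k - 1" N], of int] \<open>k \<ge> 1\<close>
    by (simp only: of_nat_mult le_add_diff_inverse2)
  moreover have "int (2 * N + 2 - i) * int (N choose (k - 1)) = 2 * int (N - (k - 1)) * int (N choose (k - 1))"
    using k \<open>k \<ge> 1\<close> by (cases "k - 1 \<le> N") (simp_all add: of_nat_diff)
  moreover have "int (i + 1) = 2 * int k + 1" using k by simp
  ultimately show ?thesis
    unfolding a by algebra
next
  case False
  then obtain k where k: "i = 2 * k + 1" by (auto elim!: oddE)
  have d: "(i - 1 + 1) div 2 = k" "(i - 1) div 2 = k" "(i + 1) div 2 = k + 1" "i div 2 = k"
    "(i + 1 + 1) div 2 = k + 1"
    using k by auto
  define s :: int where "s = (-1)^k"
  have a: "alt_coeff N (i - 1) = s * int (N choose k)"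
    "alt_coeff N i = - s * int (N choose k)"
    "alt_coeff N (i + 1) = - s * int (N choose (k + 1))"
    unfolding alt_coeff_def d s_def by simp_all
  have "int (k + 1) * int (N choose (k + 1)) = int (N - k) * int (N choose k)"
    using arg_cong[OF binomial_Suc_mult[of k N], of int] by (simp only: of_nat_mult)
  moreover have "int (2 * N + 2 - i) * int (N choose k) = (2 * int (N - k) + 1) * int (N choose k)"
    using k by (cases "k \<le> N") (simp_all add: of_nat_diff)
  moreover have "int (i + 1) = 2 * int (k + 1)" using k by simp
  ultimately show ?thesis
    unfolding a by algebra
qed

lemma weight_formula_recurrence:
  assumes "1 \<le> i"
  shows "weight_formula N i + int (i + 1) * weight_formula N (i + 1)
      + int (2 * N + 2 - i) * weight_formula N (i - 1)
    = int (2 * N + 2) * int ((2 * N + 1) choose i)"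
proof -
  have "int (n choose i) + int (i + 1) * int (n choose (i + 1)) + int (n + 1 - i) * int (n choose (i - 1))
      = int (n + 1) * int (n choose i)" for n
    using arg_cong[OF binomial_recurrence[OF assms, of n], of int] by (simp only: of_nat_add of_nat_mult of_nat_1)
  from this[of "2 * N + 1"] have "int ((2 * N + 1) choose i) + int (i + 1) * int ((2 * N + 1) choose (i + 1))
      + int (2 * N + 2 - i) * int ((2 * N + 1) choose (i - 1)) = int (2 * N + 2) * int ((2 * N + 1) choose i)"
    by (simp only: add.assoc one_add_one)
  then show ?thesis
    using alt_coeff_recurrence[OF assms, of N] unfolding weight_formula_def by algebra
qed

lemma hamming_weight_count_formula:
  assumes n: "2^m = 2 * N + 2"
  shows "int (2 * N + 2) * int (hamming_weight_count m i) = weight_formula N i"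
proof (induction i rule: less_induct)
  case (less i)
  consider "i = 0" | "i = 1" | j where "i = j + 2"
    by (metis One_nat_def add_2_eq_Suc' not0_implies_Suc)
  then show ?case
  proof cases
    case 1
    then show ?thesis by (simp add: hamming_weight_count_0 weight_formula_def alt_coeff_def)
  next
    case 2
    then show ?thesis
      using hamming_weight_count_1[of m] by (simp add: weight_formula_def alt_coeff_def)
  next
    case 3
    let ?A = "\<lambda>k. int (hamming_weight_count m k)" and ?M = "int (2 * N + 2)"
    have "2 * N + 2 - 1 = 2 * N + 1" by simp
    then have "(2 * N + 1) choose (j + 1) = hamming_weight_count m (j + 1)
        + (j + 1 + 1) * hamming_weight_count m (j + 1 + 1)
        + (2 * N + 2 - (j + 1)) * hamming_weight_count m (j + 1 - 1)"
      using hamming_weight_recurrence[of "j + 1" m, OF le_add2] by (simp only: n)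
    then have "int ((2 * N + 1) choose (j + 1)) = ?A (j + 1)
        + int (j + 1 + 1) * ?A (j + 1 + 1) + int (2 * N + 2 - (j + 1)) * ?A (j + 1 - 1)"
      by (simp only: of_nat_add of_nat_mult)
    moreover have "?M * ?A (j + 1) = weight_formula N (j + 1)"
      "?M * ?A (j + 1 - 1) = weight_formula N (j + 1 - 1)"
      using less.IH 3 by simp_all
    ultimately have "int (j + 1 + 1) * (?M * ?A (j + 1 + 1) - weight_formula N (j + 1 + 1)) = 0"
      using weight_formula_recurrence[of "j + 1" N, OF le_add2] by algebra
    then show ?thesis
      using 3 by (simp add: add.assoc)
  qed
qed

lemma weight_formula_falling_factorials:
  assumes "c * fact i = L" "d * fact (i div 2) = L"
  shows "L * weight_formula N i = c * (\<Prod>j<i. int (2 * N + 1) - int j)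
    + (-1) ^ ((i + 1) div 2) * d * int (2 * N + 1) * (\<Prod>j<i div 2. int N - int j)"
proof -
  have "L * weight_formula N i = L * int ((2 * N + 1) choose i) + L * (int (2 * N + 1) * alt_coeff N i)"
    by (simp add: weight_formula_def distrib_left)
  also have "\<dots> = c * (int ((2 * N + 1) choose i) * fact i)
      + (-1) ^ ((i + 1) div 2) * d * int (2 * N + 1) * (int (N choose (i div 2)) * fact (i div 2))"
    by (subst (1) assms(1)[symmetric], subst assms(2)[symmetric]) (simp add: alt_coeff_def algebra_simps)
  finally show ?thesis by (simp only: int_binomial_mult_fact)
qed

lemma alt_coeff_abs: "\<bar>alt_coeff N i\<bar> = int (N choose (i div 2))"
  by (simp add: alt_coeff_def abs_mult)

lemma alt_coeff_neighbours_sign: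
  assumes "1 \<le> i"
  shows "alt_coeff N (i - 1) * alt_coeff N (i + 1) \<le> 0"
proof -
  have "(i - 1 + 1) div 2 = i div 2" "(i + 1 + 1) div 2 = i div 2 + 1"
    using assms by simp_all
  then show ?thesis
    by (simp add: alt_coeff_def algebra_simps)
qed

lemma weight_formula_symmetric:
  assumes "odd N" "i \<le> 2 * N + 1"
  shows "weight_formula N (2 * N + 1 - i) = weight_formula N i"
proof -
  have "alt_coeff N (2 * N + 1 - i) = alt_coeff N i"
  proof -
    have "i div 2 \<le> N" "(2 * N + 1 - i) div 2 = N - i div 2"
      using assms(2) by auto
    moreover have "even ((2 * N + 1 - i + 1) div 2 + (i + 1) div 2)"
      using assms by (auto elim!: oddE evenE) presburger+
    ultimately show ?thesis
      by (simp add: alt_coeff_def binomial_symmetric[symmetric] minus_one_power_iff)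
  qed
  then show ?thesis
    using assms(2) by (simp add: weight_formula_def binomial_symmetric[symmetric])
qed

lemma weight_formula_0: "weight_formula N 0 = 2 * int N + 2"
  by (simp add: weight_formula_def alt_coeff_def)

lemma weight_formula_1: "weight_formula N 1 = 0"
  by (simp add: weight_formula_def alt_coeff_def)

lemma weight_formula_2: "weight_formula N 2 = 0"
  using weight_formula_falling_factorials[of 1 2 2 2 N]
  by (simp add: lessThan_nat_numeral fact_numeral algebra_simps)

lemma binomial_mult_alt_coeff_le:
  assumes "j div 2 \<le> i" "i - j div 2 \<le> N + 1"
  shows "int ((N + 1) choose (i - j div 2)) * \<bar>alt_coeff N j\<bar> \<le> int ((2 * N + 1) choose i)"
proof -
  have "(N choose (j div 2)) * ((N + 1) choose (i - j div 2)) \<le> (2 * N + 1) choose i"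
    using binomial_mult_le_vandermonde[OF assms(1), of N "N + 1"] by (simp add: mult_2)
  then show ?thesis
    by (simp add: alt_coeff_abs mult.commute flip: of_nat_mult)
qed

lemma weight_formula_pos_low:
  assumes "4 \<le> N" "3 \<le> i" "i \<le> N + 1"
  shows "0 < weight_formula N i"
proof -
  have "2 * N + 2 = (N + 1) * 4 div 2" by simp
  also have "\<dots> \<le> (N + 1) * N div 2"
    using assms(1) by (intro div_le_mono mult_le_mono) auto
  also have "\<dots> = (N + 1) choose 2"
    by (simp add: choose_two)
  also have "\<dots> \<le> (N + 1) choose (i - i div 2)"
    using assms by (intro binomial_le_binomial) auto
  finally have "int (2 * N + 2) * \<bar>alt_coeff N i\<bar>
      \<le> int ((N + 1) choose (i - i div 2)) * \<bar>alt_coeff N i\<bar>"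
    by (intro mult_right_mono) simp_all
  also have "\<dots> \<le> int ((2 * N + 1) choose i)"
    using assms by (intro binomial_mult_alt_coeff_le) auto
  finally have "int (2 * N + 1) * \<bar>alt_coeff N i\<bar> + \<bar>alt_coeff N i\<bar> \<le> int ((2 * N + 1) choose i)"
    by (simp add: algebra_simps)
  moreover have "0 < \<bar>alt_coeff N i\<bar>"
    using assms by (simp add: alt_coeff_abs)
  moreover have "- (int (2 * N + 1) * \<bar>alt_coeff N i\<bar>) \<le> int (2 * N + 1) * alt_coeff N i"
    by (metis abs_ge_minus_self abs_mult abs_of_nat minus_le_iff)
  ultimately show ?thesis
    unfolding weight_formula_def by linarith
qed

lemma weight_formula_3_0: "weight_formula 3 0 = 8"
  by (simp add: weight_formula_def alt_coeff_def)

lemma weight_formula_3_3: "weight_formula 3 3 = 56"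
proof -
  have "(7::nat) choose 3 = 35" "(3::nat) choose 1 = 3"
    by (simp_all add: numeral_eq_Suc)
  then show ?thesis
    by (simp add: weight_formula_def alt_coeff_def)
qed

lemma weight_formula_3_4: "weight_formula 3 4 = 56"
proof -
  have "(7::nat) choose 4 = 35" "(3::nat) choose 2 = 3"
    by (simp_all add: numeral_eq_Suc)
  then show ?thesis
    by (simp add: weight_formula_def alt_coeff_def)
qed

lemma weight_formula_pos:
  assumes "odd N" "3 \<le> N" "3 \<le> i" "i \<le> 2 * N - 2"
  shows "0 < weight_formula N i"
proof -
  consider "N = 3" | "5 \<le> N" "i \<le> N + 1" | "5 \<le> N" "N + 1 < i"
    using assms by atomize_elim presburger
  then show ?thesis
  proof cases
    case 1
    then have "i = 3 \<or> i = 4" using assms by auto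
    then show ?thesis using 1 weight_formula_3_3 weight_formula_3_4 by auto
  next
    case 2
    then show ?thesis using assms by (intro weight_formula_pos_low) simp_all
  next
    case 3
    have "0 < weight_formula N (2 * N + 1 - i)"
      using assms 3 by (intro weight_formula_pos_low) simp_all
    then show ?thesis
      using assms weight_formula_symmetric[OF assms(1), of i] by simp
  qed
qed

section \<open>Log-concavity\<close>

lemma scaled_alt_coeff_le_binomial:
  assumes "15 \<le> N" "8 \<le> i" "i \<le> N + 1" "i - 1 \<le> j" "j \<le> i + 1"
  shows "(int (2 * N + 1) + 2)^2 * \<bar>alt_coeff N j\<bar> \<le> int ((2 * N + 1) choose i)"
proof -
  have "(2 * N + 3)^2 \<le> (N + 1) choose 4"
    using assms(1) by (rule binomial_4_ge_square)
  also have "\<dots> \<le> (N + 1) choose (i - j div 2)"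
    using assms by (intro binomial_le_binomial) auto
  finally have "int ((2 * N + 3)^2) \<le> int ((N + 1) choose (i - j div 2))"
    by (simp only: of_nat_le_iff)
  then have "int ((2 * N + 3)^2) * \<bar>alt_coeff N j\<bar>
      \<le> int ((N + 1) choose (i - j div 2)) * \<bar>alt_coeff N j\<bar>"
    by (rule mult_right_mono) simp
  also have "\<dots> \<le> int ((2 * N + 1) choose i)"
    using assms by (intro binomial_mult_alt_coeff_le) auto
  finally show ?thesis
    by (simp add: algebra_simps)
qed

lemma weight_formula_log_concave_large:
  assumes "15 \<le> N" "8 \<le> i" "i \<le> N + 1"
  shows "weight_formula N (i - 1) * weight_formula N (i + 1) \<le> weight_formula N i ^ 2"
  unfolding weight_formula_def
  using assms alt_coeff_neighbours_sign[of i N]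
  by (intro binomial_perturbation_log_concave scaled_alt_coeff_le_binomial) auto

text \<open>For \<open>N = t + 15\<close> the values \<open>8! (n + 1) A\<^sub>i\<close> with \<open>i \<le> 8\<close> are integer polynomials in \<open>t\<close>,
  and the differences \<open>d\<close> in the log-concavity inequalities below have nonnegative coefficients.\<close>

lemma weight_formula_poly_0:
  "40320 * weight_formula (t + 15) 0 =
    1290240 + 80640 * int t"
  using weight_formula_falling_factorials[of 40320 0 40320 40320 "t + 15"]
  by (simp add: lessThan_nat_numeral fact_numeral algebra_simps power_numeral_reduce)

lemma weight_formula_poly_3:
  "40320 * weight_formula (t + 15) 3 =
    199987200 + 38734080 * int t + 2499840 * int t ^ 2 + 53760 * int t ^ 3"
  using weight_formula_falling_factorials[of 6720 3 40320 40320 "t + 15"]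
  by (simp add: lessThan_nat_numeral fact_numeral algebra_simps power_numeral_reduce)

lemma weight_formula_poly_4:
  "40320 * weight_formula (t + 15) 4 =
    1399910400 + 371132160 * int t + 36865920 * int t ^ 2 + 1626240 * int t ^ 3
    + 26880 * int t ^ 4"
  using weight_formula_falling_factorials[of 1680 4 40320 20160 "t + 15"]
  by (simp add: lessThan_nat_numeral fact_numeral algebra_simps power_numeral_reduce)

lemma weight_formula_poly_5:
  "40320 * weight_formula (t + 15) 5 =
    6719569920 + 2341398528 * int t + 325409280 * int t ^ 2 + 22552320 * int t ^ 3
    + 779520 * int t ^ 4 + 10752 * int t ^ 5"
  using weight_formula_falling_factorials[of 336 5 40320 20160 "t + 15"]
  by (simp add: lessThan_nat_numeral fact_numeral algebra_simps power_numeral_reduce)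

lemma weight_formula_poly_6:
  "40320 * weight_formula (t + 15) 6 =
    29118136320 + 12385916928 * int t + 2190573056 * int t ^ 2 + 206196480 * int t ^ 3
    + 10895360 * int t ^ 4 + 306432 * int t ^ 5 + 3584 * int t ^ 6"
  using weight_formula_falling_factorials[of 56 6 40320 6720 "t + 15"]
  by (simp add: lessThan_nat_numeral fact_numeral algebra_simps power_numeral_reduce)

lemma weight_formula_poly_7:
  "40320 * weight_formula (t + 15) 7 =
    106593177600 + 53444117760 * int t + 11483792768 * int t ^ 2 + 1370580736 * int t ^ 3
    + 98107520 * int t ^ 4 + 4211200 * int t ^ 5 + 100352 * int t ^ 6 + 1024 * int t ^ 7"
  using weight_formula_falling_factorials[of 8 7 40320 6720 "t + 15"]
  by (simp add: lessThan_nat_numeral fact_numeral algebra_simps power_numeral_reduce)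

lemma weight_formula_poly_8:
  "40320 * weight_formula (t + 15) 8 =
    319779532800 + 186980647680 * int t + 47812407744 * int t ^ 2 + 6982690400 * int t ^ 3
    + 636967744 * int t ^ 4 + 37160480 * int t ^ 5 + 1353856 * int t ^ 6 + 28160 * int t ^ 7
    + 256 * int t ^ 8"
  using weight_formula_falling_factorials[of 1 8 40320 1680 "t + 15"]
  by (simp add: lessThan_nat_numeral fact_numeral algebra_simps power_numeral_reduce)

lemma weight_formula_log_concave_4:
  "weight_formula (t + 15) 3 * weight_formula (t + 15) 5 \<le> weight_formula (t + 15) 4 ^ 2"
  by (rule le_square_of_scaled[OF _ weight_formula_poly_3 weight_formula_poly_4 weight_formula_poly_5,
      where d =
      "615921154523136000 + 310577446571212800 * t + 68389591487938560 * t ^ 2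
       + 8588467428065280 * t ^ 3 + 672673059717120 * t ^ 4 + 33642285465600 * t ^ 5
       + 1049011568640 * t ^ 6 + 18641387520 * t ^ 7 + 144506880 * t ^ 8"])
    (simp_all add: algebra_simps power_numeral_reduce)

lemma weight_formula_log_concave_5:
  "weight_formula (t + 15) 4 * weight_formula (t + 15) 6 \<le> weight_formula (t + 15) 5 ^ 2"
  by (rule le_square_of_scaled[OF _ weight_formula_poly_4 weight_formula_poly_5 weight_formula_poly_6,
      where d =
      "4389838046783078400 + 3320531490302853120 * t + 1118482895828680704 * t ^ 2
       + 221289393265704960 * t ^ 3 + 28513882631700480 * t ^ 4 + 2502750275665920 * t ^ 5
       + 151663568781312 * t ^ 6 + 6269503242240 * t ^ 7 + 169289809920 * t ^ 8
       + 2697461760 * t ^ 9 + 19267584 * t ^ 10"])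
    (simp_all add: algebra_simps power_numeral_reduce)

lemma weight_formula_log_concave_6:
  "weight_formula (t + 15) 5 * weight_formula (t + 15) 7 \<le> weight_formula (t + 15) 6 ^ 2"
  by (rule le_square_of_scaled[OF _ weight_formula_poly_5 weight_formula_poly_6 weight_formula_poly_7,
      where d =
      "131605552871925350400 + 112611039886882897920 * t + 43995211593753821184 * t ^ 2
       + 10379642318372339712 * t ^ 3 + 1647351259354759168 * t ^ 4
       + 185321447795097600 * t ^ 5 + 15154984016248832 * t ^ 6 + 907845933367296 * t ^ 7
       + 39542644506624 * t ^ 8 + 1221434081280 * t ^ 9 + 25399721984 * t ^ 10
       + 319291392 * t ^ 11 + 1835008 * t ^ 12"])
    (simp_all add: algebra_simps power_numeral_reduce)

lemma weight_formula_log_concave_7: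
  "weight_formula (t + 15) 6 * weight_formula (t + 15) 8 \<le> weight_formula (t + 15) 7 ^ 2"
  by (rule le_square_of_scaled[OF _ weight_formula_poly_6 weight_formula_poly_7 weight_formula_poly_8,
      where d =
      "2050721482448830464000 + 1988265955250405376000 * t + 895826243029506785280 * t ^ 2
       + 248615833430985474048 * t ^ 3 + 47481863967329075200 * t ^ 4
       + 6601711108709842944 * t ^ 5 + 689110546437332992 * t ^ 6 + 54862117548048384 * t ^ 7
       + 3347566725038080 * t ^ 8 + 155792876961792 * t ^ 9 + 5443645792256 * t ^ 10
       + 138481287168 * t ^ 11 + 2424504320 * t ^ 12 + 26148864 * t ^ 13 + 131072 * t ^ 14"])
    (simp_all add: algebra_simps power_numeral_reduce)

lemma weight_formula_log_concave_low:
  assumes "15 \<le> N" "4 \<le> i" "i \<le> N + 1"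
  shows "weight_formula N (i - 1) * weight_formula N (i + 1) \<le> weight_formula N i ^ 2"
proof -
  obtain t where N: "N = t + 15"
    using assms by (metis add.commute le_add_diff_inverse)
  consider "i = 4" | "i = 5" | "i = 6" | "i = 7" | "8 \<le> i"
    using assms by linarith
  then show ?thesis
    using weight_formula_log_concave_4[of t] weight_formula_log_concave_5[of t]
      weight_formula_log_concave_6[of t] weight_formula_log_concave_7[of t]
      weight_formula_log_concave_large[OF assms(1) _ assms(3)]
    by cases (simp_all add: N)
qed

lemma weight_formula_log_concave:
  assumes "odd N" "15 \<le> N" "4 \<le> i" "i \<le> 2 * N - 3"
  shows "weight_formula N (i - 1) * weight_formula N (i + 1) \<le> weight_formula N i ^ 2"
proof (cases "i \<le> N + 1")
  case True
  then show ?thesis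
    using assms by (intro weight_formula_log_concave_low) simp_all
next
  case False
  define j where "j = 2 * N + 1 - i"
  have "weight_formula N (j - 1) * weight_formula N (j + 1) \<le> weight_formula N j ^ 2"
    using assms False by (intro weight_formula_log_concave_low) (simp_all add: j_def)
  moreover have "weight_formula N (j - 1) = weight_formula N (i + 1)"
    using weight_formula_symmetric[OF assms(1), of "i + 1"] assms by (simp add: j_def)
  moreover have "weight_formula N (j + 1) = weight_formula N (i - 1)"
    using weight_formula_symmetric[OF assms(1), of "i - 1"] assms False by (simp add: j_def Suc_diff_le)
  moreover have "weight_formula N j = weight_formula N i"
    using weight_formula_symmetric[OF assms(1), of i] assms by (simp add: j_def)
  ultimately show ?thesis
    by (simp add: mult.commute)
qed

lemma weight_formula_0_4_le_3:
  assumes "N = 3 \<or> 15 \<le> N"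
  shows "weight_formula N 0 * weight_formula N 4 \<le> weight_formula N 3 ^ 2"
  using assms
proof
  assume "15 \<le> N"
  then obtain t where N: "N = t + 15"
    by (metis add.commute le_add_diff_inverse)
  show ?thesis
    unfolding N
    by (rule le_square_of_scaled[OF _ weight_formula_poly_0 weight_formula_poly_3 weight_formula_poly_4,
        where d =
        "38188659769344000 + 14900902074777600 * t + 2422706975539200 * t ^ 2
         + 210089521152000 * t ^ 3 + 10248066662400 * t ^ 4 + 266615193600 * t ^ 5
         + 2890137600 * t ^ 6"])
      (simp_all add: algebra_simps power_numeral_reduce)
qed (simp add: weight_formula_3_0 weight_formula_3_3 weight_formula_3_4)

lemma log_concave_of_weight_formula:
  fixes A :: "nat \<Rightarrow> nat"
  assumes N: "odd N" "N = 3 \<or> 15 \<le> N"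
    and scaled: "\<And>i. int (2 * N + 2) * int (A i) = weight_formula N i"
  shows "log_concave (filter (\<lambda>a. a \<noteq> 0) (map A [0..<2 * N + 1 + 1]))"
proof (rule log_concave_filter_nonzero)
  have "3 \<le> N" using N by auto
  have A_eq: "A i = A j \<longleftrightarrow> weight_formula N i = weight_formula N j" for i j
    using scaled[of i, symmetric] scaled[of j, symmetric] by simp
  have A_zero: "A i = 0 \<longleftrightarrow> weight_formula N i = 0" for i
    using scaled[of i, symmetric] by simp
  have A_pos: "0 < A i \<longleftrightarrow> 0 < weight_formula N i" for i
    using scaled[of i, symmetric] by (simp add: zero_less_mult_iff)
  have A_le: "A a * A b \<le> A c ^ 2 \<longleftrightarrow> weight_formula N a * weight_formula N b \<le> weight_formula N c ^ 2"
    for a b c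
  proof -
    have "weight_formula N a * weight_formula N b = int (2 * N + 2) ^ 2 * int (A a * A b)"
      "weight_formula N c ^ 2 = int (2 * N + 2) ^ 2 * int (A c ^ 2)"
      unfolding scaled[symmetric] by (simp_all add: power2_eq_square algebra_simps)
    then show ?thesis
      by (simp add: mult_le_cancel_left_pos del: of_nat_mult of_nat_power)
  qed
  show "7 \<le> 2 * N + 1" using \<open>3 \<le> N\<close> by simp
  show "A (2 * N + 1 - i) = A i" if "i \<le> 2 * N + 1" for i
    using A_eq weight_formula_symmetric[OF N(1) that] by blast
  show "0 < A 0" "A 1 = 0" "A 2 = 0"
    using A_pos A_zero weight_formula_0 weight_formula_1 weight_formula_2 by simp_all
  show "0 < A i" if "3 \<le> i" "i \<le> 2 * N + 1 - 3" for i
    using A_pos weight_formula_pos[OF N(1) \<open>3 \<le> N\<close>] that by simp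
  show "A 0 * A 4 \<le> A 3 ^ 2"
    using A_le weight_formula_0_4_le_3[OF N(2)] by blast
  show "A (i - 1) * A (i + 1) \<le> A i ^ 2" if "4 \<le> i" "i \<le> 2 * N + 1 - 4" for i
  proof -
    have "15 \<le> N" using N that by auto
    then show ?thesis
      using A_le weight_formula_log_concave[OF N(1)] that by simp
  qed
qed

theorem mainTheorem1:
  fixes m :: nat
  assumes "m = 3 \<or> m \<ge> 5"
  shows "log_concave_code (hamming_code m) (2^m - 1)"
proof -
  define N :: nat where "N = 2^(m - 1) - 1"
  have N1: "N + 1 = 2^(m - 1)"
    by (simp add: N_def)
  have pow: "(2::nat)^m = 2 * N + 2"
    using assms N1 by (cases m) simp_all
  have N: "odd N \<and> (N = 3 \<or> 15 \<le> N)"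
    using assms
  proof
    assume "5 \<le> m"
    then have "(2::nat)^4 \<le> 2^(m - 1)"
      by (intro power_increasing) simp_all
    moreover have "even ((2::nat)^(m - 1))"
      using \<open>5 \<le> m\<close> by simp
    ultimately show ?thesis
      unfolding N1[symmetric] by simp
  qed (simp add: N_def)
  have "int (2 * N + 2) * int (weight_count (hamming_code m) (2^m - 1) i) = weight_formula N i" for i
    unfolding weight_count_hamming_code by (rule hamming_weight_count_formula[OF pow])
  with N have "log_concave (filter (\<lambda>a. a \<noteq> 0)
      (map (weight_count (hamming_code m) (2^m - 1)) [0..<2 * N + 1 + 1]))"
    by (intro log_concave_of_weight_formula) simp_all
  then show ?thesis
    by (simp add: log_concave_code_def nonzero_weight_distribution_def pow)
qed

end
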